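(* Let $f(z)=z+\sum_{n\ge 2}a_nz^n\in\mathcal{BT}_{\mathfrak{B}}$ and let $\Gamma_1,\Gamma_2,\Gamma_3$ be the logarithmic inverse coefficients of $f$. Then $$|H_{2,1}(F_{f^{-1}}/2)|=|\Gamma_1\Gamma_3-\Gamma_2^2|\le\frac{1}{144}.$$ The inequality is sharp, with equality for $f_2(z)=\int_0^z\sqrt{1+\tanh(t^2)}\,dt$.
   Context: $\mathbb{D}=\{z\in\mathbb{C}:|z|<1\}$. $\mathcal{S}$ is the class of univalent analytic functions $f$ on $\mathbb{D}$ normalized by $f(0)=0$, $f'(0)=1$, i.e. $f(z)=z+\sum_{n\ge2}a_nz^n$. For analytic $g,h$ on $\mathbb{D}$, $g\prec h$ means there is an analytic $\omega:\mathbb{D}\to\mathbb{D}$ with $\omega(0)=0$ and $g=h\circ\omega$. Let $\mathfrak{B}(z)=\sqrt{1+\tanh z}$ (principal branch, $\mathfrak{B}(0)=1$). The class $\mathcal{BT}_{\mathfrak{B}}$ is $\{f\in\mathcal{S}: f'(z)\prec \mathfrak{B}(z)\}$. For $f\in\mathcal{S}$ the logarithmic inverse coefficients $\Gamma_n$ are defined by $F_{f^{-1}}(w):=\log\frac{f^{-1}(w)}{w}=2\sum_{n\ge1}\Gamma_n w^n$ near $w=0$; explicitly $\Gamma_1=-\tfrac12a_2$, $\Gamma_2=-\tfrac12(a_3-\tfrac32a_2^2)$, $\Gamma_3=-\tfrac12(a_4-4a_2a_3+\tfrac{10}{3}a_2^3)$. The Hankel determinant $H_{2,1}(F_{f^{-1}}/2):=\Gamma_1\Gamma_3-\Gamma_2^2=\frac{1}{48}(13a_2^4-12a_2^2a_3-12a_3^2+12a_2a_4)$.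 *)

theory Defs
  imports "HOL-Complex_Analysis.Complex_Analysis"
begin

definition classS :: "(complex \<Rightarrow> complex) set" where
  "classS = {f. f holomorphic_on ball 0 1 \<and> inj_on f (ball 0 1) \<and> f 0 = 0 \<and> deriv f 0 = 1}"

definition subord :: "(complex \<Rightarrow> complex) \<Rightarrow> (complex \<Rightarrow> complex) \<Rightarrow> bool" where
  "subord g h \<longleftrightarrow> (\<exists>\<omega>. \<omega> holomorphic_on ball 0 1 \<and> \<omega> ` ball 0 1 \<subseteq> ball 0 1 \<and> \<omega> 0 = 0
      \<and> (\<forall>z\<in>ball 0 1. g z = h (\<omega> z)))"

definition Bfun :: "complex \<Rightarrow> complex" where
  "Bfun z = csqrt (1 + tanh z)"

definition classBT :: "(complex \<Rightarrow> complex) set" where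
  "classBT = {f \<in> classS. subord (deriv f) Bfun}"

definition coef :: "(complex \<Rightarrow> complex) \<Rightarrow> nat \<Rightarrow> complex" where
  "coef f n = (deriv ^^ n) f 0 / fact n"

definition Gamma1 :: "(complex \<Rightarrow> complex) \<Rightarrow> complex" where
  "Gamma1 f = - (1/2) * coef f 2"
definition Gamma2 :: "(complex \<Rightarrow> complex) \<Rightarrow> complex" where
  "Gamma2 f = - (1/2) * (coef f 3 - (3/2) * (coef f 2)^2)"
definition Gamma3 :: "(complex \<Rightarrow> complex) \<Rightarrow> complex" where
  "Gamma3 f = - (1/2) * (coef f 4 - 4 * coef f 2 * coef f 3 + (10/3) * (coef f 2)^3)"

definition H21inv :: "(complex \<Rightarrow> complex) \<Rightarrow> complex" where
  "H21inv f = Gamma1 f * Gamma3 f - (Gamma2 f)^2"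

definition f2 :: "complex \<Rightarrow> complex" where
  "f2 z = contour_integral (linepath 0 z) (\<lambda>t. Bfun (t^2))"

end

theory Submission
  imports Defs
begin

(* If f' = B o w with w a Schwarz function, write w(z) = z phi(z) with |phi| <= 1.  Expanding
   B(z) = 1 + z/2 - z^2/8 - 5 z^3/48 + ... expresses 144 H_{2,1} through the first three Taylor
   coefficients c0, c1, c2 of phi.  By the Schur (Carlson) parametrisation
   c1 = (1 - |c0|^2) d1,  c2 = (1 - |c0|^2) (d2 - conj c0 d1^2),  |d2| <= 1 - |d1|^2,
   the triangle inequality reduces |144 H_{2,1}| <= 1 to an elementary inequality in r = |c0| and
   s = |d1|.  Equality holds for phi(z) = z, i.e. for f2. *)

unbundle no vec_syntax

lemma exp_notin_nonpos_Reals: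
  assumes "\<bar>Im v\<bar> < pi"
  shows "exp v \<notin> \<real>\<^sub>\<le>\<^sub>0"
proof
  assume "exp v \<in> \<real>\<^sub>\<le>\<^sub>0"
  hence "sin (Im v) = 0" "cos (Im v) \<le> 0"
    by (auto simp: complex_nonpos_Reals_iff Re_exp Im_exp mult_le_0_iff)
  moreover from assms have "Im v = 0" if "sin (Im v) = 0"
    using sin_zero_pi_iff that by blast
  ultimately show False by simp
qed

lemma cosh_nonzero_strip:
  assumes "\<bar>Im u\<bar> < pi/2"
  shows "cosh u \<noteq> 0"
proof
  assume "cosh u = 0"
  hence "exp (2*u) = -1" by (simp add: cosh_zero_iff exp_double)
  thus False using exp_notin_nonpos_Reals[of "2*u"] assms by (simp add: abs_mult)
qed

lemma one_plus_tanh_eq: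
  fixes u :: complex
  assumes "exp (2*u) \<noteq> -1"
  shows "1 + tanh u = 2 * exp (2*u) / (exp (2*u) + 1)"
proof -
  define e where "e = exp (2*u)"
  have ee: "exp u * exp u = e" "exp (-u) = inverse (exp u)"
    unfolding e_def by (metis exp_add mult_2) (simp add: exp_minus)
  have e1: "e + 1 \<noteq> 0" using assms unfolding e_def by (simp add: add_eq_0_iff2)
  have "exp u - inverse (exp u) = (e - 1) / exp u" "exp u + inverse (exp u) = (e + 1) / exp u"
    unfolding ee(1)[symmetric] by (simp_all add: field_simps)
  hence "tanh u = (e - 1) / (e + 1)"
    unfolding tanh_altdef ee(2) by simp
  thus ?thesis using e1 unfolding e_def[symmetric] by (simp add: field_simps)
qed

lemma one_plus_tanh_notin_nonpos_Reals:
  assumes "\<bar>Im u\<bar> < pi/2"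
  shows "1 + tanh u \<notin> \<real>\<^sub>\<le>\<^sub>0"
proof
  define e where "e = exp (2*u)"
  have e: "e \<notin> \<real>\<^sub>\<le>\<^sub>0" "e \<noteq> 0"
    using exp_notin_nonpos_Reals[of "2*u"] assms by (auto simp: e_def abs_mult)
  hence "e \<noteq> -1" by auto
  moreover assume "1 + tanh u \<in> \<real>\<^sub>\<le>\<^sub>0"
  ultimately obtain x where x: "x \<le> 0" "2 * e / (e + 1) = of_real x"
    using one_plus_tanh_eq[of u] by (auto simp: e_def elim!: nonpos_Reals_cases)
  moreover have "e + 1 \<noteq> 0" using \<open>e \<noteq> -1\<close> by (simp add: add_eq_0_iff2)
  ultimately have "2 * e = of_real x * (e + 1)" by (simp add: field_simps)
  moreover from this have "(2::complex) - of_real x \<noteq> 0" by auto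
  ultimately have "e = of_real (x / (2 - x))" by (simp add: field_simps)
  moreover have "x / (2 - x) \<le> 0" using x(1) by (simp add: divide_nonpos_pos)
  ultimately have "e \<in> \<real>\<^sub>\<le>\<^sub>0" by (simp only: nonpos_Reals_of_real_iff)
  with e(1) show False ..
qed

lemma norm_less_1_imp_strip: "norm (u::complex) < 1 \<Longrightarrow> \<bar>Im u\<bar> < pi/2"
  using abs_Im_le_cmod[of u] pi_gt3 by linarith

lemma Bfun_holomorphic: "Bfun holomorphic_on {u. \<bar>Im u\<bar> < pi/2}"
proof -
  have "(\<lambda>u. tanh u) analytic_on {u. \<bar>Im u\<bar> < pi/2}"
    by (intro analytic_intros) (use cosh_nonzero_strip in blast)
  thus ?thesis unfolding Bfun_def[abs_def]
    by (intro holomorphic_on_csqrt' holomorphic_intros analytic_imp_holomorphic)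
       (use one_plus_tanh_notin_nonpos_Reals in auto)
qed

lemma Re_Bfun_pos:
  assumes "\<bar>Im u\<bar> < pi/2"
  shows "Re (Bfun u) > 0"
proof -
  have "s^2 \<in> \<real>\<^sub>\<le>\<^sub>0" if "Re s = 0" for s :: complex
    using that by (simp add: complex_nonpos_Reals_iff power2_eq_square)
  hence "Re (csqrt w) = 0 \<Longrightarrow> w \<in> \<real>\<^sub>\<le>\<^sub>0" for w
    by (metis power2_csqrt)
  thus ?thesis using csqrt_principal[of "1 + tanh u"] one_plus_tanh_notin_nonpos_Reals[OF assms]
    by (auto simp: Bfun_def)
qed

lemma eventually_nhds_0_disc:
  "(\<And>z. norm z < 1 \<Longrightarrow> P z) \<Longrightarrow> eventually P (nhds (0::complex))"
  using eventually_nhds_in_open[of "ball 0 1" 0] by (auto elim!: eventually_mono)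

lemma holomorphic_on_imp_has_fps_expansion:
  assumes "f holomorphic_on S" "open S" "0 \<in> S"
  shows "f has_fps_expansion fps_expansion f 0"
  using assms by (intro analytic_at_imp_has_fps_expansion_0) (auto simp: analytic_at)

lemma fps_mult_nth_2: "(f * g) $ 2 = f$0 * g$2 + f$1 * g$1 + f$2 * g$0"
  by (simp add: fps_mult_nth numeral_2_eq_2)

lemma fps_mult_nth_3: "(f * g) $ 3 = f$0 * g$3 + f$1 * g$2 + f$2 * g$1 + f$3 * g$0"
  by (simp add: fps_mult_nth numeral_3_eq_3 numeral_2_eq_2)

lemmas fps_mult_nth_123 = fps_mult_nth_1 fps_mult_nth_2 fps_mult_nth_3

lemma fps_compose_nth_123:
  fixes a b :: "'a::comm_ring_1 fps"
  assumes "b$0 = 0"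
  shows "(a oo b)$1 = a$1 * b$1"
    and "(a oo b)$2 = a$1 * b$2 + a$2 * (b$1)^2"
    and "(a oo b)$3 = a$1 * b$3 + 2 * a$2 * b$1 * b$2 + a$3 * (b$1)^3"
proof -
  have sq: "(b^2)$1 = 0" "(b^2)$2 = (b$1)^2" "(b^2)$3 = 2 * b$1 * b$2"
    using assms by (simp_all add: power2_eq_square fps_mult_nth_123)
  have cube: "(b^3)$1 = 0" "(b^3)$2 = 0" "(b^3)$3 = (b$1)^3"
    using assms by (simp_all add: power3_eq_cube fps_mult_nth_123)
  show "(a oo b)$1 = a$1 * b$1"
    by (simp add: fps_compose_nth)
  show "(a oo b)$2 = a$1 * b$2 + a$2 * (b$1)^2"
    using sq by (simp add: fps_compose_nth numeral_2_eq_2)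
  show "(a oo b)$3 = a$1 * b$3 + 2 * a$2 * b$1 * b$2 + a$3 * (b$1)^3"
    using sq cube by (simp add: fps_compose_nth numeral_3_eq_3 numeral_2_eq_2 algebra_simps)
qed

lemma tanh_fps_expansion:
  defines "T \<equiv> fps_expansion (tanh :: complex \<Rightarrow> complex) 0"
  shows "tanh has_fps_expansion T" and "T$0 = 0" "T$1 = 1" "T$2 = 0" "T$3 = -1/3"
proof -
  have "(\<lambda>z. tanh z) analytic_on {0::complex}" by (intro analytic_intros) simp
  thus tanh: "tanh has_fps_expansion T"
    unfolding T_def by (rule analytic_at_imp_has_fps_expansion_0)
  have "eventually (\<lambda>z. deriv tanh z = 1 - tanh z ^ 2) (nhds (0::complex))"
  proof (rule eventually_nhds_0_disc)
    fix z :: complex assume "norm z < 1"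
    hence "cosh z \<noteq> 0" by (intro cosh_nonzero_strip norm_less_1_imp_strip)
    thus "deriv tanh z = 1 - tanh z ^ 2"
      by (intro DERIV_imp_deriv) (auto intro!: derivative_eq_intros)
  qed
  hence "deriv tanh has_fps_expansion 1 - T^2"
    by (subst has_fps_expansion_cong) (auto intro!: fps_expansion_intros tanh)
  hence riccati: "fps_deriv T = 1 - T^2"
    using has_fps_expansion_deriv[OF tanh] fps_expansion_unique_complex by blast
  have rec: "of_nat (Suc n) * T$(Suc n) = (1 - T^2)$n" for n
    using arg_cong[OF riccati, of "\<lambda>F. F$n"] by simp
  show T0: "T$0 = 0" using fps_nth_fps_expansion[OF tanh, of 0] by simp
  show T1: "T$1 = 1" using rec[of 0] T0 by (simp add: power2_eq_square)
  show T2: "T$2 = 0"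
    using rec[of 1] T0 T1 by (simp add: power2_eq_square fps_mult_nth_123 numeral_2_eq_2)
  show "T$3 = -1/3"
    using rec[of 2] T0 T1 T2
    by (simp add: power2_eq_square fps_mult_nth_123 numeral_3_eq_3 field_simps)
qed

lemma Bfun_fps_expansion:
  defines "B \<equiv> fps_expansion Bfun 0"
  shows "Bfun has_fps_expansion B" and "B$0 = 1" "B$1 = 1/2" "B$2 = -1/8" "B$3 = -5/48"
proof -
  have "open {u::complex. \<bar>Im u\<bar> < pi/2}" by (intro open_Collect_less continuous_intros)
  thus Bfun: "Bfun has_fps_expansion B"
    unfolding B_def by (intro holomorphic_on_imp_has_fps_expansion[OF Bfun_holomorphic]) auto
  obtain T :: "complex fps" where tanh: "tanh has_fps_expansion T"
    and T: "T$0 = 0" "T$1 = 1" "T$2 = 0" "T$3 = -1/3"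
    using tanh_fps_expansion by blast
  have "(\<lambda>z. Bfun z * Bfun z) has_fps_expansion B * B" by (intro fps_expansion_intros Bfun)
  moreover have "(\<lambda>z. Bfun z * Bfun z) = (\<lambda>z. 1 + tanh z)"
    by (simp add: Bfun_def fun_eq_iff flip: power2_eq_square)
  ultimately have "(\<lambda>z. 1 + tanh z) has_fps_expansion B * B" by simp
  moreover have "(\<lambda>z. 1 + tanh z) has_fps_expansion 1 + T" by (intro fps_expansion_intros tanh)
  ultimately have sq: "B * B = 1 + T" by (rule fps_expansion_unique_complex)
  have rec: "(B * B)$n = (1 + T)$n" for n using sq by simp
  show B0: "B$0 = 1" using fps_nth_fps_expansion[OF Bfun, of 0] by (simp add: Bfun_def)
  show B1: "B$1 = 1/2"
    using rec[of 1] unfolding fps_mult_nth_1 fps_add_nth B0 T by (simp add: field_simps)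
  show B2: "B$2 = -1/8"
    using rec[of 2] unfolding fps_mult_nth_2 fps_add_nth B0 B1 T by (simp add: field_simps, algebra)
  show "B$3 = -5/48"
    using rec[of 3] unfolding fps_mult_nth_3 fps_add_nth B0 B1 B2 T by (simp add: field_simps)
qed

lemma coef_eq_deriv_fps_nth:
  assumes "deriv f has_fps_expansion G"
  shows "coef f (n + 1) = G$n / (of_nat n + 1)"
proof -
  have "coef f (Suc n) = (deriv ^^ n) (deriv f) 0 / fact (Suc n)"
    unfolding coef_def by (simp only: funpow_Suc_right o_def)
  also have "(deriv ^^ n) (deriv f) 0 = G$n * fact n"
    using fps_nth_fps_expansion[OF assms, of n] by simp
  finally show ?thesis by (simp add: fact_Suc add.commute)
qed

definition hankel_functional :: "complex \<Rightarrow> complex \<Rightarrow> complex \<Rightarrow> complex" where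
  "hankel_functional c0 c1 c2 = 9/8 * c0 * c2 - c1^2 - 7/16 * c0^2 * c1 - 13/256 * c0^4"

lemma H21inv_eq_hankel_functional:
  assumes "\<phi> has_fps_expansion c"
    and "eventually (\<lambda>z. deriv f z = Bfun (z * \<phi> z)) (nhds 0)"
  shows "H21inv f = hankel_functional (c$0) (c$1) (c$2) / 144"
proof -
  define B where "B = fps_expansion Bfun 0"
  note B = Bfun_fps_expansion[folded B_def]
  have "(Bfun \<circ> (\<lambda>z. z * \<phi> z)) has_fps_expansion (B oo (fps_X * c))"
    by (intro has_fps_expansion_compose B(1) fps_expansion_intros assms(1)) simp
  hence deriv: "deriv f has_fps_expansion (B oo (fps_X * c))"
    using has_fps_expansion_cong[OF assms(2) refl] by (simp add: o_def)
  have "(fps_X * c)$0 = 0" by simp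
  note G = fps_compose_nth_123[OF this, of B]
  have coefs: "coef f 2 = c$0 / 4" "coef f 3 = (1/2 * c$1 - 1/8 * (c$0)^2) / 3"
    "coef f 4 = (1/2 * c$2 - 1/4 * c$0 * c$1 - 5/48 * (c$0)^3) / 4"
    using coef_eq_deriv_fps_nth[OF deriv, of 1] coef_eq_deriv_fps_nth[OF deriv, of 2]
      coef_eq_deriv_fps_nth[OF deriv, of 3]
    by (simp_all add: G B One_nat_def[symmetric] del: One_nat_def)
  show ?thesis
    unfolding H21inv_def Gamma1_def Gamma2_def Gamma3_def hankel_functional_def coefs
    by (simp add: field_simps power2_eq_square power3_eq_cube power4_eq_xxxx)
qed

lemma norm_disc_automorphism_less_1:
  fixes a b :: complex
  assumes "norm a < 1" "norm b < 1"
  shows "1 - cnj a * b \<noteq> 0" and "norm ((b - a) / (1 - cnj a * b)) < 1"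
proof -
  have "(norm (1 - cnj a * b))^2 - (norm (b - a))^2 = (1 - (norm a)^2) * (1 - (norm b)^2)"
    unfolding cmod_power2 by (simp add: algebra_simps power2_eq_square)
  also have "\<dots> > 0"
    using assms by (intro mult_pos_pos) (simp_all add: power_less_one_iff abs_square_less_1)
  finally have "norm (b - a) < norm (1 - cnj a * b)"
    using power2_less_imp_less by fastforce
  thus "1 - cnj a * b \<noteq> 0" and "norm ((b - a) / (1 - cnj a * b)) < 1"
    by (auto simp: norm_divide divide_less_eq)
qed

lemma holomorphic_on_disc_bounded_cases:
  assumes "g holomorphic_on ball 0 1" "\<forall>z\<in>ball 0 1. norm (g z) \<le> 1"
  obtains c where "norm c = 1" "\<forall>z\<in>ball 0 1. g z = c"
  | "\<forall>z\<in>ball 0 1. norm (g z) < 1"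
proof (cases "\<exists>z\<in>ball 0 1. norm (g z) = 1")
  case True
  then obtain z where z: "z \<in> ball 0 1" "norm (g z) = 1" by blast
  have "g constant_on ball 0 1"
    by (rule maximum_modulus_principle[OF assms(1) open_ball connected_ball open_ball order_refl z(1)])
       (use assms(2) z in auto)
  then obtain c where "\<forall>w\<in>ball 0 1. g w = c" unfolding constant_on_def by blast
  with z that(1) show ?thesis by auto
next
  case False
  with assms(2) that(2) show ?thesis by force
qed

lemma Schwarz_Lemma_factor:
  assumes "w holomorphic_on ball 0 1" "w 0 = 0" "\<And>z. norm z < 1 \<Longrightarrow> norm (w z) < 1"
  obtains p where "p holomorphic_on ball 0 1" "\<And>z. w z = z * p z"
    "\<And>z. norm z < 1 \<Longrightarrow> norm (p z) \<le> 1"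
proof
  define p where "p = (\<lambda>z. if z = 0 then deriv w 0 else (w z - w 0) / (z - 0))"
  show "p holomorphic_on ball 0 1" unfolding p_def by (rule pole_lemma_open[OF assms(1) open_ball])
  show "w z = z * p z" for z unfolding p_def using assms(2) by auto
  show "norm (p z) \<le> 1" if "norm z < 1" for z
  proof (cases "z = 0")
    case True
    thus ?thesis unfolding p_def using Schwarz_Lemma(2)[OF assms, of 0] by simp
  next
    case False
    thus ?thesis unfolding p_def using Schwarz_Lemma(1)[OF assms that] assms(2)
      by (simp add: norm_divide divide_le_eq)
  qed
qed

text \<open>The map obtained is \<open>\<psi> = (g - g 0) / (1 - cnj (g 0) * g)\<close>; all that is needed of it later is
  the identity \<open>\<psi> * (1 - cnj (g 0) * g) = g - g 0\<close>, read off on Taylor coefficients.\<close>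

lemma disc_automorphism_comp:
  assumes "g holomorphic_on ball 0 1" "\<forall>z\<in>ball 0 1. norm (g z) < 1"
  obtains \<psi> where "\<psi> holomorphic_on ball 0 1" "\<psi> 0 = 0"
    "\<And>z. norm z < 1 \<Longrightarrow> norm (\<psi> z) < 1"
    and "fps_expansion \<psi> 0 * (1 - fps_const (cnj (g 0)) * fps_expansion g 0)
           = fps_expansion g 0 - fps_const (g 0)"
proof
  define \<psi> where "\<psi> = (\<lambda>z. (g z - g 0) / (1 - cnj (g 0) * g z))"
  have g0: "norm (g 0) < 1" using assms(2) by simp
  have den: "1 - cnj (g 0) * g z \<noteq> 0" if "norm z < 1" for z
    using norm_disc_automorphism_less_1(1)[OF g0, of "g z"] assms(2) that by simp
  show holo: "\<psi> holomorphic_on ball 0 1" unfolding \<psi>_def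
    by (intro holomorphic_intros assms(1)) (use den in auto)
  show "\<psi> 0 = 0" unfolding \<psi>_def by simp
  show "norm (\<psi> z) < 1" if "norm z < 1" for z
    unfolding \<psi>_def using norm_disc_automorphism_less_1(2)[OF g0, of "g z"] assms(2) that by simp
  have G: "g has_fps_expansion fps_expansion g 0"
    by (rule holomorphic_on_imp_has_fps_expansion[OF assms(1)]) auto
  have "eventually (\<lambda>z. \<psi> z * (1 - cnj (g 0) * g z) = g z - g 0) (nhds 0)"
  proof (rule eventually_nhds_0_disc)
    fix z :: complex assume "norm z < 1"
    from den[OF this] show "\<psi> z * (1 - cnj (g 0) * g z) = g z - g 0" unfolding \<psi>_def by simp
  qed
  moreover have "(\<lambda>z. \<psi> z * (1 - cnj (g 0) * g z))
          has_fps_expansion fps_expansion \<psi> 0 * (1 - fps_const (cnj (g 0)) * fps_expansion g 0)"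
    by (intro fps_expansion_intros G holomorphic_on_imp_has_fps_expansion[OF holo]) auto
  ultimately have "(\<lambda>z. g z - g 0)
          has_fps_expansion fps_expansion \<psi> 0 * (1 - fps_const (cnj (g 0)) * fps_expansion g 0)"
    by (simp add: has_fps_expansion_cong)
  moreover have "(\<lambda>z. g z - g 0) has_fps_expansion fps_expansion g 0 - fps_const (g 0)"
    by (intro fps_expansion_intros G)
  ultimately show "fps_expansion \<psi> 0 * (1 - fps_const (cnj (g 0)) * fps_expansion g 0)
           = fps_expansion g 0 - fps_const (g 0)"
    by (rule fps_expansion_unique_complex)
qed

lemma one_minus_cnj_mult_self: "1 - cnj a * a = of_real (1 - (norm a)^2)"
  using complex_norm_square[of a] by (simp add: mult.commute)

lemma Schwarz_Pick_deriv_0: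
  assumes "g holomorphic_on ball 0 1" "\<forall>z\<in>ball 0 1. norm (g z) \<le> 1"
  shows "norm (deriv g 0) \<le> 1 - (norm (g 0))^2"
  using assms
proof (cases rule: holomorphic_on_disc_bounded_cases)
  case (1 c)
  have "eventually (\<lambda>z. g z = c) (nhds 0)" using 1(2) by (intro eventually_nhds_0_disc) simp
  hence "deriv g 0 = deriv (\<lambda>_. c) 0" by (rule deriv_cong_ev) simp
  thus ?thesis using 1 by simp
next
  case 2
  obtain \<psi> where \<psi>: "\<psi> holomorphic_on ball 0 1" "\<psi> 0 = 0"
    "\<And>z. norm z < 1 \<Longrightarrow> norm (\<psi> z) < 1"
    "fps_expansion \<psi> 0 * (1 - fps_const (cnj (g 0)) * fps_expansion g 0)
       = fps_expansion g 0 - fps_const (g 0)"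
    using disc_automorphism_comp[OF assms(1) 2] by blast
  have "deriv \<psi> 0 * (1 - cnj (g 0) * g 0) = deriv g 0"
    using arg_cong[OF \<psi>(4), of "\<lambda>F. F$1"] \<psi>(2)
    by (simp add: fps_mult_nth_1 fps_expansion_def)
  hence "deriv g 0 = deriv \<psi> 0 * of_real (1 - (norm (g 0))^2)"
    by (simp only: one_minus_cnj_mult_self)
  moreover have "0 \<le> 1 - (norm (g 0))^2" using 2 by (simp add: abs_square_le_1 less_imp_le)
  ultimately have "norm (deriv g 0) = norm (deriv \<psi> 0) * (1 - (norm (g 0))^2)"
    by (simp only: norm_mult norm_of_real abs_of_nonneg)
  also have "\<dots> \<le> 1 - (norm (g 0))^2"
    using Schwarz_Lemma(2)[OF \<psi>(1-3), of 0] \<open>0 \<le> 1 - (norm (g 0))^2\<close>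
    by (simp add: mult_left_le_one_le)
  finally show ?thesis .
qed

lemma Schur_coefficients:
  assumes "\<phi> holomorphic_on ball 0 1" "\<forall>z\<in>ball 0 1. norm (\<phi> z) \<le> 1"
  defines "c \<equiv> fps_expansion \<phi> 0"
  obtains d1 d2 where "norm d1 \<le> 1" "norm d2 \<le> 1 - (norm d1)^2"
    "c$1 = of_real (1 - (norm (c$0))^2) * d1"
    "c$2 = of_real (1 - (norm (c$0))^2) * (d2 - cnj (c$0) * d1^2)"
  using assms(1,2)
proof (cases rule: holomorphic_on_disc_bounded_cases)
  case (1 a)
  have "eventually (\<lambda>z. a = \<phi> z) (nhds 0)" using 1(2) by (intro eventually_nhds_0_disc) simp
  hence "\<phi> has_fps_expansion fps_const a"
    using has_fps_expansion_cong[of "\<lambda>_. a" \<phi>] has_fps_expansion_const[of a] by blast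
  hence "c = fps_const a" unfolding c_def by (rule fps_expansion_eqI)
  with 1(1) show ?thesis by (intro that[of 0 0]) simp_all
next
  case 2
  obtain \<psi> where \<psi>: "\<psi> holomorphic_on ball 0 1" "\<psi> 0 = 0"
    "\<And>z. norm z < 1 \<Longrightarrow> norm (\<psi> z) < 1"
    "fps_expansion \<psi> 0 * (1 - fps_const (cnj (\<phi> 0)) * c) = c - fps_const (\<phi> 0)"
    using disc_automorphism_comp[OF assms(1) 2] unfolding c_def by blast
  obtain \<chi> where \<chi>: "\<chi> holomorphic_on ball 0 1" "\<And>z. \<psi> z = z * \<chi> z"
    "\<And>z. norm z < 1 \<Longrightarrow> norm (\<chi> z) \<le> 1"
    using Schwarz_Lemma_factor[OF \<psi>(1-3)] by blast
  define X where "X = fps_expansion \<chi> 0"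
  have "\<chi> has_fps_expansion X"
    unfolding X_def by (rule holomorphic_on_imp_has_fps_expansion[OF \<chi>(1)]) auto
  hence "\<psi> has_fps_expansion fps_X * X"
    unfolding \<chi>(2)[abs_def] by (intro fps_expansion_intros)
  hence "fps_expansion \<psi> 0 = fps_X * X" by (rule fps_expansion_eqI)
  moreover have "\<phi> 0 = c$0"
    using fps_nth_fps_expansion[OF holomorphic_on_imp_has_fps_expansion[OF assms(1)]]
    unfolding c_def by simp
  ultimately have eq: "(fps_X * X) * (1 - fps_const (cnj (c$0)) * c) = c - fps_const (c$0)"
    using \<psi>(4) by simp
  define k where "k = complex_of_real (1 - (norm (c$0))^2)"
  have k: "1 - cnj (c$0) * c$0 = k" unfolding k_def by (rule one_minus_cnj_mult_self)
  have "c$1 = X$0 * (1 - cnj (c$0) * c$0)"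
    using arg_cong[OF eq, of "\<lambda>F. F$1"] by (simp add: fps_mult_nth_1)
  hence c1: "c$1 = k * X$0" unfolding k by (simp only: mult.commute)
  have "c$2 = X$1 * (1 - cnj (c$0) * c$0) - X$0 * cnj (c$0) * c$1"
    using arg_cong[OF eq, of "\<lambda>F. F$2"] by (simp add: fps_mult_nth_2 algebra_simps)
  hence c2: "c$2 = k * (X$1 - cnj (c$0) * (X$0)^2)"
    unfolding k c1 by (simp add: algebra_simps power2_eq_square)
  have "X$0 = \<chi> 0" "X$1 = deriv \<chi> 0"
    using fps_nth_fps_expansion[OF \<open>\<chi> has_fps_expansion X\<close>, of 0]
      fps_nth_fps_expansion[OF \<open>\<chi> has_fps_expansion X\<close>, of 1] by simp_all
  moreover have "norm (\<chi> 0) \<le> 1" using \<chi>(3)[of 0] by simp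
  moreover have "norm (deriv \<chi> 0) \<le> 1 - (norm (\<chi> 0))^2"
    by (rule Schwarz_Pick_deriv_0[OF \<chi>(1)]) (use \<chi>(3) in simp)
  ultimately show ?thesis
    using c1 c2 unfolding k_def by (intro that[of "X$0" "X$1"]) simp_all
qed

text \<open>The bound is a quadratic in \<open>s\<close> with nonnegative leading coefficient, hence convex in \<open>s\<close>,
  so it suffices to check \<open>s = 0\<close> and \<open>s = 1\<close>.\<close>

lemma hankel_real_bound:
  fixes r s :: real
  assumes r: "0 \<le> r" "r \<le> 1" and s: "0 \<le> s" "s \<le> 1"
  shows "9/8 * (1 - r^2) * r * (1 - s^2) + (1 - r^2) * (1 + r^2/8) * s^2
           + 7/16 * (1 - r^2) * r^2 * s + 13/256 * r^4 \<le> 1"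
proof -
  define k where "k = 1 - r^2"
  have k: "0 \<le> k" unfolding k_def using r by (simp add: power_le_one)
  define A where "A = 9/8 * k * r + 13/256 * r^4"
  define B where "B = 7/16 * k * r^2"
  define C where "C = k * (1 + r^2/8 - 9/8 * r)"
  have "1 + r^2/8 - 9/8 * r = (1 - r) * (8 - r) / 8" by (simp add: power2_eq_square algebra_simps)
  also have "\<dots> \<ge> 0" using r by simp
  finally have C: "0 \<le> C" unfolding C_def using k by simp
  have "s^2 \<le> s" using s by (simp add: power2_eq_square mult_left_le_one_le)
  hence "C * s^2 \<le> C * s" using C by (rule mult_left_mono)
  hence convex: "A + B * s + C * s^2 \<le> (1 - s) * A + s * (A + B + C)" by (simp add: algebra_simps)
  have "r * (1 - r^2) = r * (1 - r) * (1 + r)" by (simp add: power2_eq_square algebra_simps)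
  also have "\<dots> \<le> 1/4 * 2"
  proof (rule mult_mono)
    show "r * (1 - r) \<le> 1/4"
      using zero_le_power2[of "r - 1/2"] by (simp add: power2_eq_square algebra_simps)
  qed (use r in auto)
  finally have "r * (1 - r^2) \<le> 1/2" by simp
  moreover have "r^4 \<le> 1" using r by (simp add: power_le_one)
  moreover have "A = 9/8 * (r * (1 - r^2)) + 13/256 * r^4" unfolding A_def k_def by simp
  ultimately have A: "A \<le> 1" by linarith
  have "A + B + C = 1 - 7/16 * r^2 - 131/256 * r^4"
    unfolding A_def B_def C_def k_def by (simp add: field_simps power2_eq_square power4_eq_xxxx)
  moreover have "0 \<le> r^2" "0 \<le> r^4" by simp_all
  ultimately have ABC: "A + B + C \<le> 1" by linarith
  have "(1 - s) * A + s * (A + B + C) \<le> (1 - s) * 1 + s * 1"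
    using s by (intro add_mono mult_left_mono A ABC) auto
  moreover have "9/8 * (1 - r^2) * r * (1 - s^2) + (1 - r^2) * (1 + r^2/8) * s^2
           + 7/16 * (1 - r^2) * r^2 * s + 13/256 * r^4 = A + B * s + C * s^2"
    unfolding A_def B_def C_def k_def by (simp add: field_simps power2_eq_square)
  ultimately show ?thesis using convex by simp
qed

lemma norm_diff_diff_diff_le:
  fixes a b c d :: "'a::real_normed_vector"
  shows "norm (a - b - c - d) \<le> norm a + norm b + norm c + norm d"
  using norm_triangle_ineq4[of "a - b - c" d] norm_triangle_ineq4[of "a - b" c]
    norm_triangle_ineq4[of a b]
  by linarith

lemma norm_hankel_functional_le_1:
  fixes c0 d1 d2 :: complex
  assumes "norm c0 \<le> 1" "norm d1 \<le> 1" "norm d2 \<le> 1 - (norm d1)^2"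
  defines "k \<equiv> 1 - (norm c0)^2"
  shows "norm (hankel_functional c0 (of_real k * d1) (of_real k * (d2 - cnj c0 * d1^2))) \<le> 1"
proof -
  define r where "r = norm c0"
  define s where "s = norm d1"
  have r: "0 \<le> r" "r \<le> 1" and s: "0 \<le> s" "s \<le> 1"
    using assms(1,2) by (auto simp: r_def s_def)
  have k: "0 \<le> k" unfolding k_def using assms(1) by (simp add: power_le_one)
  have "c0 * cnj c0 = of_real r ^ 2" unfolding r_def using complex_norm_square[of c0] by simp
  hence "hankel_functional c0 (of_real k * d1) (of_real k * (d2 - cnj c0 * d1^2))
     = 9/8 * of_real k * c0 * d2 - (9/8 * of_real r ^ 2 + of_real k) * of_real k * d1^2
       - 7/16 * of_real k * c0^2 * d1 - 13/256 * c0^4"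
    unfolding hankel_functional_def by algebra
  hence "norm (hankel_functional c0 (of_real k * d1) (of_real k * (d2 - cnj c0 * d1^2)))
     = norm (of_real (9/8 * k) * c0 * d2 - of_real ((9/8 * r^2 + k) * k) * d1^2
       - of_real (7/16 * k) * c0^2 * d1 - 13/256 * c0^4)"
    by simp
  also have "\<dots> \<le> norm (of_real (9/8 * k) * c0 * d2)
      + norm (of_real ((9/8 * r^2 + k) * k) * d1^2)
      + norm (of_real (7/16 * k) * c0^2 * d1) + norm (13/256 * c0^4)"
    by (rule norm_diff_diff_diff_le)
  also have "\<dots> = 9/8 * k * r * norm d2 + (9/8 * r^2 + k) * k * s^2 + 7/16 * k * r^2 * s
                  + 13/256 * r^4"
    using k by (simp add: norm_mult norm_power r_def s_def del: of_real_mult of_real_add)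
  also have "\<dots> \<le> 9/8 * k * r * (1 - s^2) + (9/8 * r^2 + k) * k * s^2 + 7/16 * k * r^2 * s
                  + 13/256 * r^4"
    using mult_left_mono[OF assms(3), of "9/8 * k * r"] k r unfolding s_def by simp
  also have "\<dots> \<le> 1"
    using hankel_real_bound[OF r s] unfolding k_def r_def by (simp add: algebra_simps)
  finally show ?thesis .
qed

lemma norm_H21inv_le:
  assumes "f \<in> classBT"
  shows "norm (H21inv f) \<le> 1/144"
proof -
  obtain w where w: "w holomorphic_on ball 0 1" "w ` ball 0 1 \<subseteq> ball 0 1" "w 0 = 0"
    and f': "\<forall>z\<in>ball 0 1. deriv f z = Bfun (w z)"
    using assms unfolding classBT_def subord_def by blast
  obtain \<phi> where \<phi>: "\<phi> holomorphic_on ball 0 1" "\<And>z. w z = z * \<phi> z"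
    "\<And>z. norm z < 1 \<Longrightarrow> norm (\<phi> z) \<le> 1"
  proof (rule Schwarz_Lemma_factor[OF w(1,3)])
    show "norm (w z) < 1" if "norm z < 1" for z using w(2) that by (auto simp: image_subset_iff)
  qed blast
  define c where "c = fps_expansion \<phi> 0"
  have "\<phi> has_fps_expansion c"
    unfolding c_def by (rule holomorphic_on_imp_has_fps_expansion[OF \<phi>(1)]) auto
  moreover have "eventually (\<lambda>z. deriv f z = Bfun (z * \<phi> z)) (nhds 0)"
    using f' \<phi>(2) by (intro eventually_nhds_0_disc) simp
  ultimately have H: "H21inv f = hankel_functional (c$0) (c$1) (c$2) / 144"
    by (rule H21inv_eq_hankel_functional)
  obtain d1 d2 where "norm d1 \<le> 1" "norm d2 \<le> 1 - (norm d1)^2"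
    "c$1 = of_real (1 - (norm (c$0))^2) * d1"
    "c$2 = of_real (1 - (norm (c$0))^2) * (d2 - cnj (c$0) * d1^2)"
    using Schur_coefficients[OF \<phi>(1)] \<phi>(3) unfolding c_def by auto
  moreover have "norm (c$0) \<le> 1"
    using \<phi>(3)[of 0] fps_nth_fps_expansion[OF \<open>\<phi> has_fps_expansion c\<close>, of 0] by simp
  ultimately have "norm (hankel_functional (c$0) (c$1) (c$2)) \<le> 1"
    using norm_hankel_functional_le_1 by simp
  thus ?thesis unfolding H by (simp add: norm_divide)
qed

lemma has_field_derivative_contour_integral_linepath:
  assumes "convex S" "open S" "f holomorphic_on S" "a \<in> S" "z \<in> S"
  shows "((\<lambda>x. contour_integral (linepath a x) f) has_field_derivative f z) (at z)"
proof -
  obtain g where g: "\<And>x. x \<in> S \<Longrightarrow> (g has_field_derivative f x) (at x within S)"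
    using holomorphic_convex_primitive'[OF assms(1-3)] by metis
  have eq: "g x - g a = contour_integral (linepath a x) f" if "x \<in> S" for x
  proof -
    have "closed_segment a x \<subseteq> S" using assms(4) that assms(1) by (rule closed_segment_subset)
    hence "(f has_contour_integral (g (pathfinish (linepath a x)) - g (pathstart (linepath a x))))
             (linepath a x)"
      by (intro contour_integral_primitive[OF g]) auto
    thus ?thesis by (simp add: contour_integral_unique)
  qed
  have "((\<lambda>x. g x - g a) has_field_derivative f z) (at z)"
    using g[OF assms(5)] assms(5)
    by (auto intro!: derivative_eq_intros simp: at_within_open[OF _ assms(2)])
  thus ?thesis by (rule has_field_derivative_transform_within_open[OF _ assms(2,5) eq])
qed

text \<open>Noshiro--Warschawski: along the segment from \<open>z\<close> to \<open>w\<close> the real function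
  \<open>Re (f / (w - z))\<close> has derivative \<open>Re f' > 0\<close>, so its values at the ends differ.\<close>

lemma inj_on_if_Re_deriv_pos:
  assumes "convex S"
    and "\<And>z. z \<in> S \<Longrightarrow> (f has_field_derivative f' z) (at z)"
    and "\<And>z. z \<in> S \<Longrightarrow> Re (f' z) > 0"
  shows "inj_on f S"
proof (rule inj_onI, rule ccontr)
  fix z w assume zw: "z \<in> S" "w \<in> S" "f z = f w" "z \<noteq> w"
  define h where "h = (\<lambda>t. Re (f (linepath z w t) / (w - z)))"
  have "h 0 < h 1"
  proof (rule DERIV_pos_imp_increasing[of 0 1 h])
    fix t :: real assume t: "0 \<le> t" "t \<le> 1"
    hence p: "linepath z w t \<in> S"
      using closed_segment_subset[OF zw(1,2) assms(1)] linepath_in_path[of t z w] by auto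
    have "((\<lambda>t. f (linepath z w t) / (w - z)) has_vector_derivative f' (linepath z w t)) (at t)"
      using field_vector_diff_chain_at[OF has_vector_derivative_linepath_within assms(2)[OF p]]
        zw(4)
      by (auto simp: o_def intro!: derivative_eq_intros)
    hence "(h has_real_derivative Re (f' (linepath z w t))) (at t)"
      unfolding h_def by (rule has_field_derivative_Re)
    thus "\<exists>y. (h has_real_derivative y) (at t) \<and> y > 0" using assms(3)[OF p] by blast
  qed simp
  thus False using zw(3) by (simp add: h_def linepath_def)
qed

lemma norm_power2_less_1: "norm (z::complex) < 1 \<Longrightarrow> norm (z^2) < 1"
  by (simp add: norm_power power_less_one_iff abs_square_less_1)

lemma holomorphic_Bfun_square: "(\<lambda>t. Bfun (t^2)) holomorphic_on ball 0 1"
proof (rule holomorphic_on_compose_gen[OF _ Bfun_holomorphic, unfolded o_def])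
  show "(\<lambda>t. t^2) ` ball 0 1 \<subseteq> {u. \<bar>Im u\<bar> < pi/2}"
    using norm_less_1_imp_strip norm_power2_less_1 by auto
qed (intro holomorphic_intros)

lemma f2_has_field_derivative:
  assumes "norm z < 1"
  shows "(f2 has_field_derivative Bfun (z^2)) (at z)"
  unfolding f2_def[abs_def]
  by (rule has_field_derivative_contour_integral_linepath
        [OF convex_ball open_ball holomorphic_Bfun_square]) (use assms in auto)

lemma deriv_f2: "norm z < 1 \<Longrightarrow> deriv f2 z = Bfun (z^2)"
  using f2_has_field_derivative by (rule DERIV_imp_deriv)

lemma f2_in_classBT: "f2 \<in> classBT"
proof -
  have "f2 holomorphic_on ball 0 1"
    unfolding holomorphic_on_open[OF open_ball] using f2_has_field_derivative by fastforce
  moreover have "inj_on f2 (ball 0 1)"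
    by (rule inj_on_if_Re_deriv_pos[OF convex_ball f2_has_field_derivative])
       (use Re_Bfun_pos norm_less_1_imp_strip norm_power2_less_1 in auto)
  moreover have "f2 0 = 0" "deriv f2 0 = 1"
    using deriv_f2[of 0] by (simp_all add: f2_def Bfun_def)
  moreover have "subord (deriv f2) Bfun"
    unfolding subord_def using deriv_f2
    by (intro exI[of _ "\<lambda>z. z^2"])
       (auto intro!: holomorphic_intros norm_power2_less_1)
  ultimately show ?thesis by (simp add: classBT_def classS_def)
qed

lemma H21inv_f2: "H21inv f2 = -1/144"
proof -
  have "eventually (\<lambda>z. deriv f2 z = Bfun (z * z)) (nhds 0)"
    by (intro eventually_nhds_0_disc) (simp add: deriv_f2 power2_eq_square)
  hence "H21inv f2 = hankel_functional 0 1 0 / 144"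
    using H21inv_eq_hankel_functional[OF has_fps_expansion_fps_X] by simp
  thus ?thesis by (simp add: hankel_functional_def)
qed

theorem theorem4p2:
  shows "(\<forall>f \<in> classBT. cmod (H21inv f) \<le> 1/144)
         \<and> f2 \<in> classBT \<and> cmod (H21inv f2) = 1/144"
  using norm_H21inv_le f2_in_classBT H21inv_f2 by simp

end
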